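(* Let $f:\mathbb{R}^n\to\mathbb{R}$ and $c:\mathbb{R}^n\to\mathbb{R}^m$ ($m<n$) be smooth, with $g(x)=\nabla f(x)$ and Jacobian $J(x)=\nabla c(x)\in\mathbb{R}^{m\times n}$. Suppose noisy evaluations $\tilde f,\tilde c,\tilde g,\tilde J$ satisfy, for all $x\in\mathbb{R}^n$, $|\tilde f(x)-f(x)|\le\epsilon_f$, $\|\tilde c(x)-c(x)\|_1\le\epsilon_c$, $\|\tilde g(x)-g(x)\|\le\epsilon_g$, $\|\tilde J(x)-J(x)\|_{1,2}\le\epsilon_J$, for positive constants $\epsilon_f,\epsilon_c,\epsilon_g,\epsilon_J$. Let $\{x_k\}$ be a sequence of points, write $g_k=g(x_k)$, $c_k=c(x_k)$, $J_k=J(x_k)$, $\tilde g_k=\tilde g(x_k)$, $\tilde c_k=\tilde c(x_k)$, $\tilde J_k=\tilde J(x_k)$, and suppose there is $\gamma>\epsilon_J$ with $\sigma_{\min}(J_k)\ge\gamma$ for all $k$. Set $\delta=1/(\gamma-\epsilon_J)$ and $\eta=1/\gamma$. For $\beta_k>0$ let $d_k$ be the solution of $\min_{d\in\mathbb{R}^n}\ \tfrac12\beta_k\|d\|^2+\tilde g_k^Td$ subject to $\tilde c_k+\tilde J_kd=0$, and write $d_k=v_k+u_k$ with $v_k=-\tilde J_k^T(\tilde J_k\tilde J_k^T)^{-1}\tilde c_k$ and $u_k=-\frac{1}{\beta_k}\tilde P_k\tilde g_k$. Then $$\|v_k\|_1\le\delta\|\tilde c_k\|_1\le\delta(\|c_k\|_1+\epsilon_c),\qquad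 \|u_k\|\le\frac{1}{\beta_k}\big(\|P_kg_k\|+\|g_k\|\eta\epsilon_J+\epsilon_g\big),$$ and therefore $$\|d_k\|\le\delta(\|c_k\|_1+\epsilon_c)+\frac{1}{\beta_k}\big(\|P_kg_k\|+\|g_k\|\eta\epsilon_J+\epsilon_g\big).$$
   Context: $\|\cdot\|$ denotes the Euclidean norm. $\|\cdot\|_{1,2}$ is the matrix norm of an $m\times n$ matrix $A$ given by $\sup_{x\ne0}\|Ax\|_1/\|x\|$ (induced by the $\ell_1$ norm on $\mathbb{R}^m$ and the Euclidean norm on $\mathbb{R}^n$). $\sigma_{\min}(A)$ is the smallest singular value of $A$. $\tilde P_k=I-\tilde J_k^T(\tilde J_k\tilde J_k^T)^{-1}\tilde J_k$ and $P_k=I-J_k^T(J_kJ_k^T)^{-1}J_k$ are the orthogonal projections onto the null spaces of $\tilde J_k$ and $J_k$ respectively. Under the hypotheses, $\tilde J_k$ has full row rank so $d_k$ is well defined. *)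

theory Defs
  imports "HOL-Analysis.Analysis"
begin

definition l1norm :: "real ^ 'n \<Rightarrow> real" where
  "l1norm x = (\<Sum>i\<in>UNIV. \<bar>x $ i\<bar>)"

definition norm12 :: "real ^ 'n ^ 'm \<Rightarrow> real" where
  "norm12 A = (SUP x\<in>{x :: real ^ 'n. x \<noteq> 0}. l1norm (A *v x) / norm x)"

text \<open>Smallest singular value of an m x n matrix with m \<le> n: the square root of the
  smallest eigenvalue of A A^T (the m singular values of A are the square roots of
  the eigenvalues of A A^T).\<close>
definition sigma_min :: "real ^ 'n ^ 'm \<Rightarrow> real" where
  "sigma_min A = sqrt (Inf {lam. \<exists>v. v \<noteq> 0 \<and> (A ** transpose A) *v v = lam *s v})"

end

(*
  The quadratic program has a unique solution: the feasible point d at which beta d + gt is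
  orthogonal to ker Jt.  The point v + u is feasible and has this property, so d = v + u.

  The hypothesis sigma_min J >= gamma says gamma |y| <= |J^T y|.  Since the (1,2)-norm bounds
  the transpose in the Euclidean norm, this survives the perturbation with constant
  gamma - eps_J for Jt.  For v = -Jt^T z with Jt Jt^T z = ct this gives
  |v|^2 = z . ct <= |v| |ct| / (gamma - eps_J).  For u, write P g = g - J^T y, where
  gamma |y| <= |J^T y| <= |g|; as Pt g is the shortest vector in g + range Jt^T,
  |Pt g| <= |g - Jt^T y| = |P g - (Jt - J)^T y| <= |P g| + eps_J |g| / gamma.
*)

theory Submission
  imports Defs
begin

text \<open>Keep products with a transpose in the form \<^term>\<open>transpose A *v y\<close> used throughout,
  instead of rewriting them to \<^term>\<open>y v* A\<close>.\<close>
declare transpose_matrix_vector [simp del]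

text \<open>Both notions are meaningful only when \<^term>\<open>A ** transpose A\<close> is invertible;
  otherwise \<^const>\<open>matrix_inv\<close> yields an unspecified matrix.\<close>
definition min_norm_solution :: "real^'n^'m \<Rightarrow> real^'m \<Rightarrow> real^'n" where
  "min_norm_solution A b = transpose A *v (matrix_inv (A ** transpose A) *v b)"

definition null_proj :: "real^'n^'m \<Rightarrow> real^'n^'n" where
  "null_proj A = mat 1 - transpose A ** matrix_inv (A ** transpose A) ** A"

section \<open>Gram matrices, least-norm solutions and null-space projections\<close>

lemma inner_transpose_mult: "(transpose A *v y) \<bullet> z = y \<bullet> (A *v z)"
  for A :: "real^'n^'m"
  by (simp add: dot_lmul_matrix transpose_matrix_vector)

lemma inner_gram_mult: "y \<bullet> ((A ** transpose A) *v y) = (norm (transpose A *v y))\<^sup>2"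
  for A :: "real^'n^'m"
  by (simp only: power2_norm_eq_inner inner_transpose_mult matrix_vector_mul_assoc)

lemma transpose_diff: "transpose (B - A) = transpose B - transpose A"
  for A B :: "real^'n^'m"
  by (simp add: transpose_def vec_eq_iff)

lemma matrix_vector_mult_uminus: "A *v (- x) = - (A *v x)"
  for A :: "real^'n^'m"
  using linear_neg[OF matrix_vector_mul_linear] .

lemma matrix_inv_right: "invertible M \<Longrightarrow> M ** matrix_inv M = mat 1"
  for M :: "real^'m^'m"
  unfolding invertible_def matrix_inv_def by (rule conjunct1[OF someI_ex]) blast

lemma invertible_gram_if_bounded_below:
  fixes A :: "real^'n^'m"
  assumes below: "\<And>y. s * norm y \<le> norm (transpose A *v y)" and "s > 0"
  shows "invertible (A ** transpose A)"
proof -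
  have "y = 0" if "(A ** transpose A) *v y = 0" for y
  proof -
    have "transpose A *v y = 0"
      using inner_gram_mult[of y A] that by simp
    then show "y = 0" using below[of y] \<open>s > 0\<close> by (simp add: mult_le_0_iff)
  qed
  then show ?thesis
    using matrix_left_invertible_ker invertible_left_inverse by blast
qed

lemma mult_min_norm_solution:
  "invertible (A ** transpose A) \<Longrightarrow> A *v min_norm_solution A b = b"
  for A :: "real^'n^'m"
  by (simp add: min_norm_solution_def matrix_vector_mul_assoc matrix_mul_assoc matrix_inv_right)

lemma inner_min_norm_solution_kernel:
  "A *v w = 0 \<Longrightarrow> min_norm_solution A b \<bullet> w = 0"
  for A :: "real^'n^'m"
  by (simp add: min_norm_solution_def inner_transpose_mult)

lemma norm_min_norm_solution_le:
  fixes A :: "real^'n^'m"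
  assumes below: "\<And>y. s * norm y \<le> norm (transpose A *v y)" and "s > 0"
  shows "s * norm (min_norm_solution A b) \<le> norm b"
proof -
  define z where "z = matrix_inv (A ** transpose A) *v b"
  have sol_eq: "min_norm_solution A b = transpose A *v z"
    unfolding min_norm_solution_def z_def ..
  have "(norm (min_norm_solution A b))\<^sup>2 = z \<bullet> b"
    using mult_min_norm_solution[OF invertible_gram_if_bounded_below[OF assms], of b]
    by (simp add: sol_eq power2_norm_eq_inner inner_transpose_mult)
  also have "\<dots> \<le> norm z * norm b"
    by (rule norm_cauchy_schwarz)
  also have "s * \<dots> \<le> norm (min_norm_solution A b) * norm b"
    using below[of z] by (simp add: sol_eq mult.assoc[symmetric] mult_right_mono)
  finally show ?thesis
    using \<open>s > 0\<close> by (cases "min_norm_solution A b = 0") (simp_all add: power2_eq_square)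
qed

lemma null_proj_mult: "null_proj A *v x = x - min_norm_solution A (A *v x)"
  for A :: "real^'n^'m"
  by (simp add: null_proj_def min_norm_solution_def matrix_vector_mult_diff_rdistrib
      matrix_vector_mul_assoc matrix_mul_assoc)

lemma mult_null_proj:
  "invertible (A ** transpose A) \<Longrightarrow> A *v (null_proj A *v x) = 0"
  for A :: "real^'n^'m"
  by (simp add: null_proj_mult matrix_vector_mult_diff_distrib mult_min_norm_solution)

lemma orthogonal_null_proj_transpose:
  "invertible (A ** transpose A) \<Longrightarrow> orthogonal (null_proj A *v x) (transpose A *v y)"
  for A :: "real^'n^'m"
  by (simp add: orthogonal_def inner_commute[of _ "transpose A *v y"] inner_transpose_mult
      mult_null_proj)

lemma norm_null_proj_le_dist:
  fixes A :: "real^'n^'m"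
  assumes "invertible (A ** transpose A)"
  shows "norm (null_proj A *v x) \<le> norm (x - transpose A *v y)"
proof -
  define z where "z = matrix_inv (A ** transpose A) *v (A *v x)"
  have "x - transpose A *v y = null_proj A *v x + transpose A *v (z - y)"
    by (simp add: null_proj_mult min_norm_solution_def z_def matrix_vector_mult_diff_distrib)
  then have "(norm (x - transpose A *v y))\<^sup>2
      = (norm (null_proj A *v x))\<^sup>2 + (norm (transpose A *v (z - y)))\<^sup>2"
    using norm_add_Pythagorean orthogonal_null_proj_transpose[OF assms] by metis
  then show ?thesis
    by (simp add: power2_le_imp_le)
qed

lemma norm_null_proj_le:
  "invertible (A ** transpose A) \<Longrightarrow> norm (null_proj A *v x) \<le> norm x"
  for A :: "real^'n^'m"
  using norm_null_proj_le_dist[of A x 0] by simp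

lemma norm_min_norm_solution_mult_le:
  fixes A :: "real^'n^'m"
  assumes "invertible (A ** transpose A)"
  shows "norm (min_norm_solution A (A *v x)) \<le> norm x"
proof -
  have "x = null_proj A *v x + transpose A *v (matrix_inv (A ** transpose A) *v (A *v x))"
    by (simp add: null_proj_mult min_norm_solution_def)
  then have "(norm x)\<^sup>2 = (norm (null_proj A *v x))\<^sup>2 + (norm (min_norm_solution A (A *v x)))\<^sup>2"
    using norm_add_Pythagorean orthogonal_null_proj_transpose[OF assms]
    unfolding min_norm_solution_def by metis
  then show ?thesis
    by (simp add: power2_le_imp_le)
qed

section \<open>The (1,2)-norm and perturbations\<close>

lemma norm_le_l1norm: "norm x \<le> l1norm x"
  unfolding l1norm_def by (rule norm_le_l1_cart)

lemma l1norm_le_add_diff: "l1norm a \<le> l1norm b + l1norm (a - b)"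
  unfolding l1norm_def sum.distrib[symmetric] by (rule sum_mono) simp

lemma l1norm_mult_le_entrywise:
  fixes E :: "real^'n^'m"
  shows "l1norm (E *v x) \<le> (\<Sum>i\<in>UNIV. \<Sum>j\<in>UNIV. \<bar>E$i$j\<bar>) * norm x"
proof -
  have "\<bar>\<Sum>j\<in>UNIV. E$i$j * x$j\<bar> \<le> (\<Sum>j\<in>UNIV. \<bar>E$i$j\<bar> * norm x)" for i
    by (rule order_trans[OF sum_abs sum_mono])
      (simp add: abs_mult mult_left_mono component_le_norm_cart)
  then show ?thesis
    unfolding l1norm_def matrix_vector_mult_def sum_distrib_right
    by (simp add: sum_mono)
qed

lemma l1norm_mult_le_norm12: "l1norm (E *v x) \<le> norm12 E * norm x"
  for E :: "real^'n^'m"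
proof (cases "x = 0")
  case False
  have "bdd_above ((\<lambda>x. l1norm (E *v x) / norm x) ` {x. x \<noteq> 0})"
    using l1norm_mult_le_entrywise[of E]
    by (intro bdd_aboveI2[where M = "\<Sum>i\<in>UNIV. \<Sum>j\<in>UNIV. \<bar>E$i$j\<bar>"])
      (simp add: divide_le_eq)
  then have "l1norm (E *v x) / norm x \<le> norm12 E"
    unfolding norm12_def using False by (intro cSUP_upper) simp_all
  then show ?thesis
    using False by (simp add: divide_le_eq)
qed (simp add: l1norm_def)

lemma norm12_nonneg: "0 \<le> norm12 E"
  for E :: "real^'n^'m"
proof -
  fix i :: 'n
  have "0 \<le> l1norm (E *v axis i 1)"
    by (simp add: l1norm_def sum_nonneg)
  also have "\<dots> \<le> norm12 E"
    using l1norm_mult_le_norm12[of E "axis i 1"] by simp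
  finally show ?thesis .
qed

lemma norm_mult_le_norm12: "norm (E *v x) \<le> norm12 E * norm x"
  for E :: "real^'n^'m"
  using norm_le_l1norm l1norm_mult_le_norm12 order_trans by blast

lemma norm_transpose_mult_le_norm12: "norm (transpose E *v y) \<le> norm12 E * norm y"
  for E :: "real^'n^'m"
proof -
  let ?w = "transpose E *v y"
  have "(norm ?w)\<^sup>2 = y \<bullet> (E *v ?w)"
    by (simp only: power2_norm_eq_inner inner_transpose_mult)
  also have "\<dots> \<le> norm y * norm (E *v ?w)"
    by (rule norm_cauchy_schwarz)
  also have "\<dots> \<le> norm ?w * (norm12 E * norm y)"
    using mult_left_mono[OF norm_mult_le_norm12[of E ?w] norm_ge_zero[of y]]
    by (simp only: ac_simps)
  finally have "norm ?w * norm ?w \<le> norm ?w * (norm12 E * norm y)"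
    by (simp only: power2_eq_square)
  then show ?thesis
    using norm12_nonneg[of E] mult_le_cancel_left_pos[of "norm ?w"]
    by (cases "norm ?w = 0") simp_all
qed

lemma transpose_bounded_below_perturb:
  fixes A B :: "real^'n^'m"
  assumes "\<And>y. s * norm y \<le> norm (transpose A *v y)"
  shows "(s - norm12 (B - A)) * norm y \<le> norm (transpose B *v y)"
proof -
  have "transpose A *v y = transpose B *v y - transpose (B - A) *v y"
    by (simp only: transpose_diff matrix_vector_mult_diff_rdistrib diff_diff_eq2 add_diff_cancel_left')
  then have "norm (transpose A *v y) \<le> norm (transpose B *v y) + norm (transpose (B - A) *v y)"
    by (simp only: norm_triangle_ineq4)
  also have "\<dots> \<le> norm (transpose B *v y) + norm12 (B - A) * norm y"
    by (simp only: add_left_mono norm_transpose_mult_le_norm12)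
  finally have "norm (transpose A *v y) \<le> norm (transpose B *v y) + norm12 (B - A) * norm y" .
  then show ?thesis
    using assms[of y] unfolding left_diff_distrib by linarith
qed

lemma norm_null_proj_perturb_le:
  fixes A B :: "real^'n^'m"
  assumes below: "\<And>y. \<gamma> * norm y \<le> norm (transpose A *v y)" and "0 < \<gamma>"
    and invB: "invertible (B ** transpose B)"
  shows "norm (null_proj B *v x) \<le> norm (null_proj A *v x) + norm x * (1 / \<gamma>) * norm12 (B - A)"
proof -
  define y where "y = matrix_inv (A ** transpose A) *v (A *v x)"
  have PA: "null_proj A *v x = x - transpose A *v y"
    unfolding null_proj_mult min_norm_solution_def y_def ..
  have "\<gamma> * norm y \<le> norm x"
    using below[of y] norm_min_norm_solution_mult_le[OF invertible_gram_if_bounded_below[OF assms(1,2)]]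
    unfolding min_norm_solution_def y_def by (rule order_trans)
  then have y_bound: "norm y \<le> norm x * (1 / \<gamma>)"
    using \<open>0 < \<gamma>\<close> by (simp add: field_simps)
  have "norm (null_proj B *v x) \<le> norm (x - transpose B *v y)"
    by (rule norm_null_proj_le_dist[OF invB])
  also have "x - transpose B *v y = null_proj A *v x - transpose (B - A) *v y"
    by (simp only: PA transpose_diff matrix_vector_mult_diff_rdistrib diff_diff_eq2 diff_add_cancel)
  also have "norm \<dots> \<le> norm (null_proj A *v x) + norm12 (B - A) * norm y"
    using norm_triangle_ineq4 norm_transpose_mult_le_norm12 add_left_mono order_trans by metis
  also have "\<dots> \<le> norm (null_proj A *v x) + norm12 (B - A) * (norm x * (1 / \<gamma>))"
    using y_bound norm12_nonneg by (intro add_left_mono mult_left_mono)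
  finally show ?thesis
    by (simp only: ac_simps)
qed

section \<open>The smallest singular value\<close>

lemma linear_coeff_zero_if_quadratic_nonneg:
  fixes a b :: real
  assumes nonneg: "\<And>t. 0 \<le> 2 * t * b + t\<^sup>2 * a"
  shows "b = 0"
proof (rule ccontr)
  assume "b \<noteq> 0"
  define t where "t = - b / (\<bar>a\<bar> + 1)"
  have t: "t * (\<bar>a\<bar> + 1) = - b"
    unfolding t_def by (simp add: add_pos_nonneg)
  have "(\<bar>a\<bar> + 1)\<^sup>2 * (2 * t * b + t\<^sup>2 * a)
      = 2 * b * (\<bar>a\<bar> + 1) * (t * (\<bar>a\<bar> + 1)) + (t * (\<bar>a\<bar> + 1))\<^sup>2 * a"
    by (simp add: algebra_simps power2_eq_square)
  also have "\<dots> = b\<^sup>2 * (a - 2 * \<bar>a\<bar> - 2)"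
    unfolding t by (simp add: algebra_simps power2_eq_square)
  also have "\<dots> < 0"
    using \<open>b \<noteq> 0\<close> by (intro mult_pos_neg) auto
  finally show False
    using nonneg[of t] by (simp add: mult_less_0_iff)
qed

lemma symmetric_matrix_rayleigh_min_eigenvector:
  fixes M :: "real^'m^'m"
  assumes sym: "transpose M = M"
    and lower: "\<And>y. l * (norm y)\<^sup>2 \<le> y \<bullet> (M *v y)"
    and attained: "y0 \<bullet> (M *v y0) = l * (norm y0)\<^sup>2"
  shows "M *v y0 = l *s y0"
proof -
  have "z \<bullet> (M *v y0 - l *\<^sub>R y0) = 0" for z
  proof (rule linear_coeff_zero_if_quadratic_nonneg)
    fix t
    have "y0 \<bullet> (M *v z) = z \<bullet> (M *v y0)"
      using inner_transpose_mult[of M y0 z] by (simp only: sym inner_commute)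
    then have "(y0 + t *\<^sub>R z) \<bullet> (M *v (y0 + t *\<^sub>R z))
        = y0 \<bullet> (M *v y0) + 2 * t * (z \<bullet> (M *v y0)) + t\<^sup>2 * (z \<bullet> (M *v z))"
      by (simp add: matrix_vector_right_distrib matrix_scaleR_vector_ac
          scaleR_matrix_vector_assoc[symmetric] inner_add_left inner_add_right
          algebra_simps power2_eq_square)
    moreover have "(norm (y0 + t *\<^sub>R z))\<^sup>2 = (norm y0)\<^sup>2 + 2 * t * (y0 \<bullet> z) + t\<^sup>2 * (norm z)\<^sup>2"
      unfolding power2_norm_eq_inner
      by (simp add: inner_add_left inner_add_right inner_commute algebra_simps power2_eq_square)
    ultimately show "0 \<le> 2 * t * (z \<bullet> (M *v y0 - l *\<^sub>R y0)) + t\<^sup>2 * (z \<bullet> (M *v z) - l * (norm z)\<^sup>2)"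
      using lower[of "y0 + t *\<^sub>R z"] attained
      by (simp add: inner_diff_right inner_commute algebra_simps)
  qed
  from this[of "M *v y0 - l *\<^sub>R y0"] show ?thesis
    by (simp add: scalar_mult_eq_scaleR)
qed

lemma gram_min_eigenvalue_exists:
  fixes A :: "real^'n^'m"
  obtains l y0 where "y0 \<noteq> 0" "(A ** transpose A) *v y0 = l *s y0"
    and "\<And>y. l * (norm y)\<^sup>2 \<le> (norm (transpose A *v y))\<^sup>2"
proof -
  define R where "R y = (norm (transpose A *v y))\<^sup>2" for y
  have "continuous_on (sphere 0 1) R"
    unfolding R_def by (intro continuous_intros)
  moreover have "sphere (0 :: real^'m) 1 \<noteq> {}"
    using norm_axis_1 by (metis dist_0_norm mem_sphere empty_iff)
  ultimately obtain y0 where y0: "norm y0 = 1" and min: "\<And>y. norm y = 1 \<Longrightarrow> R y0 \<le> R y"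
    using continuous_attains_inf[OF compact_sphere] by (metis mem_sphere_0)
  have lower: "R y0 * (norm y)\<^sup>2 \<le> R y" for y
  proof (cases "y = 0")
    case False
    have "R y0 \<le> R ((1 / norm y) *\<^sub>R y)"
      using False by (intro min) simp
    also have "\<dots> = R y / (norm y)\<^sup>2"
      by (simp add: R_def matrix_scaleR_vector_ac scaleR_matrix_vector_assoc[symmetric]
          power_divide)
    finally show ?thesis
      using False by (simp add: field_simps)
  qed (simp add: R_def)
  show thesis
  proof (rule that)
    show "y0 \<noteq> 0"
      using y0 by auto
    show "(A ** transpose A) *v y0 = R y0 *s y0"
      by (rule symmetric_matrix_rayleigh_min_eigenvector)
        (use lower y0 in \<open>simp_all add: matrix_transpose_mul inner_gram_mult R_def\<close>)
    show "R y0 * (norm y)\<^sup>2 \<le> (norm (transpose A *v y))\<^sup>2" for y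
      using lower unfolding R_def .
  qed
qed

lemma transpose_bounded_below_if_sigma_min_ge:
  fixes A :: "real^'n^'m"
  assumes "\<gamma> \<le> sigma_min A" "0 < \<gamma>"
  shows "\<gamma> * norm y \<le> norm (transpose A *v y)"
proof -
  define E where "E = {lam. \<exists>v. v \<noteq> 0 \<and> (A ** transpose A) *v v = lam *s v}"
  obtain l y0 where "y0 \<noteq> 0" "(A ** transpose A) *v y0 = l *s y0"
    and lower: "\<And>y. l * (norm y)\<^sup>2 \<le> (norm (transpose A *v y))\<^sup>2"
    using gram_min_eigenvalue_exists[of A] by blast
  then have "l \<in> E"
    unfolding E_def by blast
  have "bdd_below E"
  proof (rule bdd_belowI)
    fix lam assume "lam \<in> E"
    then obtain v where "v \<noteq> 0" "(A ** transpose A) *v v = lam *s v"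
      unfolding E_def by blast
    then have "lam * (norm v)\<^sup>2 = (norm (transpose A *v v))\<^sup>2"
      using inner_gram_mult[of v A] by (simp add: scalar_mult_eq_scaleR power2_norm_eq_inner)
    then have "0 \<le> lam * (norm v)\<^sup>2"
      by simp
    then show "0 \<le> lam"
      using \<open>v \<noteq> 0\<close> by (simp add: zero_le_mult_iff)
  qed
  have "\<gamma>\<^sup>2 \<le> Inf E"
    using assms by (intro sqrt_ge_absD) (simp add: sigma_min_def E_def)
  also have "\<dots> \<le> l"
    using \<open>l \<in> E\<close> \<open>bdd_below E\<close> by (rule cInf_lower)
  finally have "(\<gamma> * norm y)\<^sup>2 \<le> (norm (transpose A *v y))\<^sup>2"
    using lower[of y] mult_right_mono[of "\<gamma>\<^sup>2" l "(norm y)\<^sup>2"]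
    by (simp add: power_mult_distrib)
  then show ?thesis
    by (rule power2_le_imp_le) simp
qed

section \<open>The equality-constrained quadratic program\<close>

lemma qp_minimizer_eq_stationary_point:
  fixes A :: "real^'n^'m"
  assumes "0 < \<beta>"
    and p_feas: "b + A *v p = 0"
    and p_stationary: "\<And>w. A *v w = 0 \<Longrightarrow> (\<beta> *\<^sub>R p + g) \<bullet> w = 0"
    and d_feas: "b + A *v d = 0"
    and d_min: "\<And>e. b + A *v e = 0 \<Longrightarrow>
                 1/2 * \<beta> * (norm d)\<^sup>2 + g \<bullet> d \<le> 1/2 * \<beta> * (norm e)\<^sup>2 + g \<bullet> e"
  shows "d = p"
proof -
  define w where "w = d - p"
  have "A *v d = A *v p"
    using p_feas d_feas by (metis add_left_cancel)
  then have "A *v w = 0"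
    by (simp add: w_def matrix_vector_mult_diff_distrib)
  then have "(\<beta> *\<^sub>R p + g) \<bullet> w = 0"
    by (rule p_stationary)
  moreover have "1/2 * \<beta> * (norm d)\<^sup>2 + g \<bullet> d
      = 1/2 * \<beta> * (norm p)\<^sup>2 + g \<bullet> p + (\<beta> *\<^sub>R p + g) \<bullet> w + 1/2 * \<beta> * (norm w)\<^sup>2"
    unfolding power2_norm_eq_inner w_def
    by (simp add: inner_diff_left inner_diff_right inner_commute algebra_simps)
  ultimately have "1/2 * \<beta> * (norm w)\<^sup>2 \<le> 0"
    using d_min[OF p_feas] by simp
  then show "d = p"
    using \<open>0 < \<beta>\<close> by (simp add: w_def mult_le_0_iff)
qed

lemma qp_solution_decomposition:
  fixes A :: "real^'n^'m"
  assumes inv: "invertible (A ** transpose A)" and "0 < \<beta>"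
    and d_feas: "b + A *v d = 0"
    and d_min: "\<And>e. b + A *v e = 0 \<Longrightarrow>
                 1/2 * \<beta> * (norm d)\<^sup>2 + g \<bullet> d \<le> 1/2 * \<beta> * (norm e)\<^sup>2 + g \<bullet> e"
  shows "d = - min_norm_solution A b + - ((1 / \<beta>) *\<^sub>R (null_proj A *v g))"
proof (rule qp_minimizer_eq_stationary_point[OF \<open>0 < \<beta>\<close> _ _ d_feas d_min])
  show "b + A *v (- min_norm_solution A b + - ((1 / \<beta>) *\<^sub>R (null_proj A *v g))) = 0"
    by (simp add: matrix_vector_mult_diff_distrib matrix_vector_mult_uminus matrix_scaleR_vector_ac
        scaleR_matrix_vector_assoc[symmetric] mult_min_norm_solution[OF inv] mult_null_proj[OF inv])
  have "\<beta> *\<^sub>R (- min_norm_solution A b + - ((1 / \<beta>) *\<^sub>R (null_proj A *v g))) + g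
      = min_norm_solution A (A *v g) - \<beta> *\<^sub>R min_norm_solution A b"
    using \<open>0 < \<beta>\<close> by (simp add: null_proj_mult algebra_simps)
  then show "(\<beta> *\<^sub>R (- min_norm_solution A b + - ((1 / \<beta>) *\<^sub>R (null_proj A *v g))) + g) \<bullet> w = 0"
    if "A *v w = 0" for w
    using that by (simp add: inner_diff_left inner_min_norm_solution_kernel)
qed

lemma noisy_step_bounds:
  fixes J Jt :: "real^'n^'m" and g gt d :: "real^'n" and c ct :: "real^'m"
  assumes J_below: "\<And>y. \<gamma> * norm y \<le> norm (transpose J *v y)"
    and noise_J: "norm12 (Jt - J) \<le> eps_J" and gamma: "eps_J < \<gamma>"
    and noise_c: "l1norm (ct - c) \<le> eps_c" and noise_g: "norm (gt - g) \<le> eps_g"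
    and "0 < \<beta>" and d_feas: "ct + Jt *v d = 0"
    and d_min: "\<And>e. ct + Jt *v e = 0 \<Longrightarrow>
                 1/2 * \<beta> * (norm d)\<^sup>2 + gt \<bullet> d \<le> 1/2 * \<beta> * (norm e)\<^sup>2 + gt \<bullet> e"
  defines "v \<equiv> - min_norm_solution Jt ct"
    and "u \<equiv> - ((1 / \<beta>) *\<^sub>R (null_proj Jt *v gt))"
    and "B \<equiv> norm (null_proj J *v g) + norm g * (1 / \<gamma>) * eps_J + eps_g"
  shows "d = v + u
    \<and> norm v \<le> 1 / (\<gamma> - eps_J) * l1norm ct
    \<and> 1 / (\<gamma> - eps_J) * l1norm ct \<le> 1 / (\<gamma> - eps_J) * (l1norm c + eps_c)
    \<and> norm u \<le> (1 / \<beta>) * B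
    \<and> norm d \<le> 1 / (\<gamma> - eps_J) * (l1norm c + eps_c) + (1 / \<beta>) * B"
proof -
  have "0 \<le> eps_J"
    using norm12_nonneg noise_J by (rule order_trans)
  then have "0 < \<gamma>"
    using gamma by linarith
  have Jt_below: "(\<gamma> - eps_J) * norm y \<le> norm (transpose Jt *v y)" for y
  proof -
    have "(\<gamma> - eps_J) * norm y \<le> (\<gamma> - norm12 (Jt - J)) * norm y"
      using noise_J by (intro mult_right_mono) simp_all
    also have "\<dots> \<le> norm (transpose Jt *v y)"
      by (rule transpose_bounded_below_perturb[OF J_below])
    finally show ?thesis .
  qed
  have inv: "invertible (Jt ** transpose Jt)"
    by (rule invertible_gram_if_bounded_below[OF Jt_below]) (use gamma in simp)
  have d_eq: "d = v + u"
    unfolding v_def u_def using qp_solution_decomposition[OF inv \<open>0 < \<beta>\<close> d_feas d_min] .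
  have "(\<gamma> - eps_J) * norm v \<le> norm ct"
    unfolding v_def norm_minus_cancel
    by (rule norm_min_norm_solution_le[OF Jt_below]) (use gamma in simp)
  then have v_bound: "norm v \<le> 1 / (\<gamma> - eps_J) * l1norm ct"
    using gamma norm_le_l1norm[of ct] by (simp add: field_simps)
  have c_bound: "1 / (\<gamma> - eps_J) * l1norm ct \<le> 1 / (\<gamma> - eps_J) * (l1norm c + eps_c)"
    using l1norm_le_add_diff[of ct c] noise_c gamma by (intro mult_left_mono) simp_all
  have "norm g * (1 / \<gamma>) * norm12 (Jt - J) \<le> norm g * (1 / \<gamma>) * eps_J"
    using noise_J \<open>0 < \<gamma>\<close> by (intro mult_left_mono) simp_all
  then have "norm (null_proj Jt *v g) \<le> norm (null_proj J *v g) + norm g * (1 / \<gamma>) * eps_J"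
    using norm_null_proj_perturb_le[OF J_below \<open>0 < \<gamma>\<close> inv, of g] by linarith
  moreover have "norm (null_proj Jt *v (gt - g)) \<le> eps_g"
    using norm_null_proj_le[OF inv] noise_g by (rule order_trans)
  moreover have "norm (null_proj Jt *v gt) \<le> norm (null_proj Jt *v g) + norm (null_proj Jt *v (gt - g))"
    unfolding matrix_vector_mult_diff_distrib by (rule norm_triangle_sub)
  ultimately have "norm (null_proj Jt *v gt) \<le> B"
    unfolding B_def by linarith
  then have u_bound: "norm u \<le> (1 / \<beta>) * B"
    using \<open>0 < \<beta>\<close> by (simp add: u_def divide_right_mono)
  have "norm d \<le> norm v + norm u"
    unfolding d_eq by (rule norm_triangle_ineq)
  then show ?thesis
    using d_eq v_bound c_bound u_bound by linarith
qed

theorem lemma3p1: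
  fixes f :: "real ^ 'n \<Rightarrow> real" and c :: "real ^ 'n \<Rightarrow> real ^ 'm"
    and g :: "real ^ 'n \<Rightarrow> real ^ 'n" and J :: "real ^ 'n \<Rightarrow> real ^ 'n ^ 'm"
    and ft :: "real ^ 'n \<Rightarrow> real" and ct :: "real ^ 'n \<Rightarrow> real ^ 'm"
    and gt :: "real ^ 'n \<Rightarrow> real ^ 'n" and Jt :: "real ^ 'n \<Rightarrow> real ^ 'n ^ 'm"
    and eps_f eps_c eps_g eps_J \<gamma> :: real
    and x :: "nat \<Rightarrow> real ^ 'n" and \<beta> :: "nat \<Rightarrow> real" and d :: "nat \<Rightarrow> real ^ 'n"
  assumes dims: "CARD('m) < CARD('n)"
    and f_deriv: "\<And>y. (f has_derivative (\<lambda>h. g y \<bullet> h)) (at y)"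
    and c_deriv: "\<And>y. (c has_derivative (\<lambda>h. J y *v h)) (at y)"
    and g_cont: "continuous_on UNIV g" and J_cont: "continuous_on UNIV J"
    and eps_pos: "eps_f > 0" "eps_c > 0" "eps_g > 0" "eps_J > 0"
    and noise_f: "\<And>y. \<bar>ft y - f y\<bar> \<le> eps_f"
    and noise_c: "\<And>y. l1norm (ct y - c y) \<le> eps_c"
    and noise_g: "\<And>y. norm (gt y - g y) \<le> eps_g"
    and noise_J: "\<And>y. norm12 (Jt y - J y) \<le> eps_J"
    and gamma: "\<gamma> > eps_J"
    and sigma: "\<And>k. sigma_min (J (x k)) \<ge> \<gamma>"
    and beta_pos: "\<And>k. \<beta> k > 0"
    and d_feas: "\<And>k. ct (x k) + Jt (x k) *v d k = 0"
    and d_min: "\<And>k e. ct (x k) + Jt (x k) *v e = 0 \<Longrightarrow>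
                 1/2 * \<beta> k * (norm (d k))\<^sup>2 + gt (x k) \<bullet> d k
                 \<le> 1/2 * \<beta> k * (norm e)\<^sup>2 + gt (x k) \<bullet> e"
  shows "\<forall>k.
    (let \<delta> = 1 / (\<gamma> - eps_J); \<eta> = 1 / \<gamma>;
         gk = g (x k); ck = c (x k); Jk = J (x k);
         gtk = gt (x k); ctk = ct (x k); Jtk = Jt (x k);
         Ptk = mat 1 - transpose Jtk ** matrix_inv (Jtk ** transpose Jtk) ** Jtk;
         Pk = mat 1 - transpose Jk ** matrix_inv (Jk ** transpose Jk) ** Jk;
         vk = - (transpose Jtk *v (matrix_inv (Jtk ** transpose Jtk) *v ctk));
         uk = - ((1 / \<beta> k) *\<^sub>R (Ptk *v gtk));
         B = norm (Pk *v gk) + norm gk * \<eta> * eps_J + eps_g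
     in d k = vk + uk
        \<and> norm vk \<le> \<delta> * l1norm ctk
        \<and> \<delta> * l1norm ctk \<le> \<delta> * (l1norm ck + eps_c)
        \<and> norm uk \<le> (1 / \<beta> k) * B
        \<and> norm (d k) \<le> \<delta> * (l1norm ck + eps_c) + (1 / \<beta> k) * B)"
proof -
  have "0 < \<gamma>"
    using gamma eps_pos(4) by linarith
  show ?thesis
    unfolding Let_def null_proj_def[symmetric] min_norm_solution_def[symmetric]
  proof (intro allI noisy_step_bounds)
    fix k y
    show "\<gamma> * norm y \<le> norm (transpose (J (x k)) *v y)"
      using sigma \<open>0 < \<gamma>\<close> by (rule transpose_bounded_below_if_sigma_min_ge)
  qed (use noise_J noise_c noise_g gamma beta_pos d_feas d_min in auto)
qed

end
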